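(* Let $N\ge2$, $\mathcal{D}=\{d_1,\dots,d_N\}\subset\mathbb{Z}$ with $\#\mathcal{D}=N$, and $\tau_{d_i}(x)=\frac1N(x+d_i)$ on $\mathbb{R}$. If the attractor $X$ of $\{\tau_{d_i}\}$ is a self-similar tile (equivalently, has positive Lebesgue measure), then there exists $\mathcal{E}\subset\mathbb{Z}$ such that $\mathcal{D}\oplus\mathcal{E}=\mathbb{Z}$.
   Context: The attractor $X$ is the unique nonempty compact set with $X=\bigcup_i\tau_{d_i}(X)$; it is a self-similar tile if it has positive Lebesgue measure (then it tiles $\mathbb{R}$ by translations). $\mathcal{D}\oplus\mathcal{E}=\mathbb{Z}$ means every integer is uniquely $d+e$ with $d\in\mathcal{D}$, $e\in\mathcal{E}$. *)

theory Defs
  imports "HOL-Analysis.Analysis"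
begin

definition tau :: "nat \<Rightarrow> int \<Rightarrow> real \<Rightarrow> real" where
  "tau N d x = (x + real_of_int d) / real N"

text \<open>X is the attractor of the IFS {tau_d : d in D}: the unique nonempty compact
  set with X = union of tau_d(X). (Uniqueness is a theorem, so it suffices to
  characterise X by these properties.)\<close>
definition is_attractor :: "nat \<Rightarrow> int set \<Rightarrow> real set \<Rightarrow> bool" where
  "is_attractor N D X \<longleftrightarrow> X \<noteq> {} \<and> compact X \<and> X = (\<Union>d\<in>D. tau N d ` X)"

definition direct_sum_Z :: "int set \<Rightarrow> int set \<Rightarrow> bool" where
  "direct_sum_Z D E \<longleftrightarrow> (\<forall>z::int. \<exists>!p. p \<in> D \<times> E \<and> z = fst p + snd p)"

end

theory Submission
  imports Defs
begin

(* Let X be the attractor of {tau_d : d in D} and Y_k = N^k X.  Iterating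
   X = U_d tau_d(X) gives Y_k = U_w (a(w) + X) over the N^k digit words w in D^k, where
   a(w) = sum_i w_i N^i.  As |Y_k| = N^k |X| equals the total measure of these N^k
   translates, distinct translates overlap only in null sets.  Since X is compact of
   positive measure, for each length l some integer window of length l is covered by a
   suitable Y_k up to a set of measure < 1/l.  A shift x in [0,1) avoiding both the l
   translates of this defect (total measure < 1) and the null overlaps puts every x + z,
   z in the window, into exactly one translate; splitting off the first digit of its word
   yields E_n such that D + E_n is a direct sum covering [-n, n].  A compactness argument
   for subsets of Z finally produces E with D (+) E = Z.
   The file develops (1) local tilings and compactness in Z, (2) measure-theoretic facts on
   the line, (3) the self-similar set itself, and ends with the theorem. *)

section \<open>Local tilings of the integers\<close>

definition win :: "nat \<Rightarrow> int set" where
  "win M = {- int M .. int M}"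

definition packing :: "int set \<Rightarrow> int set \<Rightarrow> bool" where
  "packing D E \<longleftrightarrow> (\<forall>d\<in>D. \<forall>d'\<in>D. \<forall>e\<in>E. \<forall>e'\<in>E. d + e = d' + e' \<longrightarrow> d = d' \<and> e = e')"

definition covers :: "int set \<Rightarrow> int set \<Rightarrow> int set \<Rightarrow> bool" where
  "covers D E Z \<longleftrightarrow> (\<forall>z\<in>Z. \<exists>d\<in>D. \<exists>e\<in>E. z = d + e)"

lemma direct_sum_Z_if_packing_covers:
  assumes "packing D E" and "covers D E UNIV"
  shows "direct_sum_Z D E"
  unfolding direct_sum_Z_def
proof
  fix z :: int
  obtain d e where de: "d \<in> D" "e \<in> E" "z = d + e"
    using assms(2) unfolding covers_def by blast
  show "\<exists>!p. p \<in> D \<times> E \<and> z = fst p + snd p"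
  proof (rule ex1I[of _ "(d, e)"])
    show "(d, e) \<in> D \<times> E \<and> z = fst (d, e) + snd (d, e)" using de by simp
  next
    fix p assume "p \<in> D \<times> E \<and> z = fst p + snd p"
    then show "p = (d, e)" using assms(1) de unfolding packing_def by (cases p) auto
  qed
qed

definition agree_on :: "(nat \<Rightarrow> int set) \<Rightarrow> nat \<Rightarrow> nat set \<Rightarrow> bool" where
  "agree_on Es M J \<longleftrightarrow> (\<forall>n\<in>J. \<forall>n'\<in>J. Es n \<inter> win M = Es n' \<inter> win M)"

text \<open>Pigeonhole: a window carries only finitely many patterns.\<close>
lemma infinite_agreeing_subset:
  assumes "infinite I"
  shows "\<exists>J. J \<subseteq> I \<and> infinite J \<and> agree_on Es M J"
proof -
  have "finite ((\<lambda>n. Es n \<inter> win M) ` I)"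
    by (rule finite_subset[of _ "Pow (win M)"]) (auto simp: win_def)
  then obtain n0 where "infinite {n\<in>I. Es n \<inter> win M = Es n0 \<inter> win M}"
    using pigeonhole_infinite[OF assms] by blast
  moreover have "agree_on Es M {n\<in>I. Es n \<inter> win M = Es n0 \<inter> win M}"
    unfolding agree_on_def by auto
  ultimately show ?thesis by (intro exI[of _ "{n\<in>I. Es n \<inter> win M = Es n0 \<inter> win M}"]) auto
qed

primrec agreeing_chain :: "(nat \<Rightarrow> int set) \<Rightarrow> nat \<Rightarrow> nat set" where
  "agreeing_chain Es 0 = UNIV"
| "agreeing_chain Es (Suc M) =
     (SOME J. J \<subseteq> agreeing_chain Es M \<and> infinite J \<and> agree_on Es M J)"

lemma agreeing_chain_Suc:
  assumes "infinite (agreeing_chain Es M)"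
  shows "agreeing_chain Es (Suc M) \<subseteq> agreeing_chain Es M \<and>
    infinite (agreeing_chain Es (Suc M)) \<and> agree_on Es M (agreeing_chain Es (Suc M))"
proof -
  let ?P = "\<lambda>J. J \<subseteq> agreeing_chain Es M \<and> infinite J \<and> agree_on Es M J"
  have P: "?P (SOME J. ?P J)" by (rule someI_ex[OF infinite_agreeing_subset[OF assms]])
  have eq: "agreeing_chain Es (Suc M) = (SOME J. ?P J)" by (simp only: agreeing_chain.simps)
  show ?thesis using P unfolding eq[symmetric] .
qed

lemma infinite_agreeing_chain: "infinite (agreeing_chain Es M)"
proof (induction M)
  case 0
  show ?case by simp
next
  case (Suc M)
  show ?case using agreeing_chain_Suc[OF Suc.IH] by blast
qed

lemma agreeing_chain_decreasing:
  assumes "M \<le> K"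
  shows "agreeing_chain Es K \<subseteq> agreeing_chain Es M"
proof (rule lift_Suc_antimono_le[of "agreeing_chain Es", OF _ assms])
  show "agreeing_chain Es (Suc n) \<subseteq> agreeing_chain Es n" for n
    using agreeing_chain_Suc[OF infinite_agreeing_chain[of Es n]] by (rule conjunct1)
qed

lemma agreeing_chain_agree: "agree_on Es M (agreeing_chain Es (Suc M))"
proof -
  have "infinite (agreeing_chain Es M)" by (rule infinite_agreeing_chain)
  then show ?thesis by (rule agreeing_chain_Suc[THEN conjunct2, THEN conjunct2])
qed

text \<open>Compactness of the space of subsets of Z: every sequence of sets has a limit point,
  i.e.\ a set that agrees with arbitrarily late members on every window.\<close>
lemma local_limit_of_int_sets:
  fixes Es :: "nat \<Rightarrow> int set"
  shows "\<exists>E. \<forall>M. \<exists>n\<ge>M. E \<inter> win M = Es n \<inter> win M"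
proof -
  let ?C = "agreeing_chain Es"
  define E where "E = {z. \<forall>n\<in>?C (Suc (nat \<bar>z\<bar>)). z \<in> Es n}"
  have "\<exists>n\<ge>M. E \<inter> win M = Es n \<inter> win M" for M
  proof -
    obtain n where n: "n \<in> ?C (Suc M)" "n \<ge> M"
      using infinite_agreeing_chain infinite_nat_iff_unbounded_le by blast
    have "z \<in> E \<longleftrightarrow> z \<in> Es n" if z: "z \<in> win M" for z
    proof -
      define K where "K = nat \<bar>z\<bar>"
      have "K \<le> M" using z by (auto simp: win_def K_def)
      then have nK: "n \<in> ?C (Suc K)" using agreeing_chain_decreasing[of "Suc K" "Suc M"] n by auto
      have "z \<in> win K" by (auto simp: win_def K_def)
      moreover have "Es n' \<inter> win K = Es n \<inter> win K" if "n' \<in> ?C (Suc K)" for n'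
        using agreeing_chain_agree[of Es K] that nK unfolding agree_on_def by blast
      ultimately have "z \<in> Es n' \<longleftrightarrow> z \<in> Es n" if "n' \<in> ?C (Suc K)" for n'
        using that by blast
      moreover have "z \<in> E \<longleftrightarrow> (\<forall>n'\<in>?C (Suc K). z \<in> Es n')"
        unfolding E_def K_def by simp
      ultimately show ?thesis using nK by blast
    qed
    then show ?thesis using n by blast
  qed
  then show ?thesis by blast
qed

text \<open>Local tilings of all windows glue to a tiling of Z.  Finiteness of D bounds the e
  in z = d + e, so whether e lies in the limit set is decided in a bounded window.\<close>
lemma tiling_from_local_tilings:
  assumes finD: "finite D" and local: "\<And>n. \<exists>E. packing D E \<and> covers D E (win n)"
  shows "\<exists>E. direct_sum_Z D E"
proof -
  obtain Es where Es: "\<And>n. packing D (Es n) \<and> covers D (Es n) (win n)"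
    using local by metis
  obtain E where E: "\<And>M. \<exists>n\<ge>M. E \<inter> win M = Es n \<inter> win M"
    using local_limit_of_int_sets by blast
  have "D \<noteq> {}" using Es[of 0] unfolding covers_def win_def by auto
  define B where "B = Max (abs ` D)"
  have dB: "\<bar>d\<bar> \<le> B" if "d \<in> D" for d unfolding B_def using that finD by (intro Max_ge) auto
  have "B \<ge> 0" using \<open>D \<noteq> {}\<close> dB by force
  have "packing D E" unfolding packing_def
  proof (intro ballI impI)
    fix d d' e e' assume de: "d \<in> D" "d' \<in> D" "e \<in> E" "e' \<in> E" "d + e = d' + e'"
    define M where "M = nat (max \<bar>e\<bar> \<bar>e'\<bar>)"
    obtain n where n: "E \<inter> win M = Es n \<inter> win M" using E by blast
    have "e \<in> win M" "e' \<in> win M" unfolding M_def win_def by auto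
    then have "e \<in> Es n" "e' \<in> Es n" using n de(3,4) by blast+
    then show "d = d' \<and> e = e'" using Es[of n] de unfolding packing_def by blast
  qed
  moreover have "covers D E UNIV" unfolding covers_def
  proof
    fix z :: int
    define M where "M = nat (\<bar>z\<bar> + B)"
    obtain n where n: "n \<ge> M" "E \<inter> win M = Es n \<inter> win M" using E by blast
    have "z \<in> win n" using n(1) \<open>B \<ge> 0\<close> unfolding M_def win_def by auto
    then obtain d e where de: "d \<in> D" "e \<in> Es n" "z = d + e"
      using Es[of n] unfolding covers_def by blast
    have "\<bar>e\<bar> \<le> int M" using dB[OF de(1)] de(3) \<open>B \<ge> 0\<close> unfolding M_def by linarith
    then have "e \<in> win M" unfolding win_def by auto
    then have "e \<in> E" using n(2) de(2) by blast
    then show "\<exists>d\<in>D. \<exists>e\<in>E. z = d + e" using de by blast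
  qed
  ultimately show ?thesis using direct_sum_Z_if_packing_covers by blast
qed

section \<open>Measure-theoretic facts on the real line\<close>

lemma lmeasurable_Ico: "{a..<b::real} \<in> lmeasurable"
proof (rule fmeasurableI2)
  show "cbox a b \<in> lmeasurable" by (rule lmeasurable_cbox)
  show "{a..<b} \<subseteq> cbox a b" by auto
  show "{a..<b} \<in> sets lebesgue" by simp
qed

lemma measure_Ico:
  assumes "a \<le> b"
  shows "measure lebesgue {a..<b::real} = b - a"
  using assms measure_completion[of "{a..<b}" lborel] by simp

lemma image_scaling_eq:
  assumes "(c::real) \<noteq> 0"
  shows "(\<lambda>x. c *\<^sub>R x + 0) ` A = {y. y / c \<in> A}"
proof (intro set_eqI iffI)
  fix y assume "y \<in> {y. y / c \<in> A}"
  then have "y / c \<in> A" "y = c *\<^sub>R (y / c) + 0" using assms by auto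
  then show "y \<in> (\<lambda>x. c *\<^sub>R x + 0) ` A" by blast
qed (use assms in auto)

lemma image_translation_eq: "(+) (c::real) ` A = {y. y - c \<in> A}"
proof (intro set_eqI iffI)
  fix y assume "y \<in> {y. y - c \<in> A}"
  then have "y - c \<in> A" "y = c + (y - c)" by auto
  then show "y \<in> (+) c ` A" by blast
qed auto

lemma unit_interval_not_covered:
  assumes "A \<in> lmeasurable" and "measure lebesgue A < 1" and "Z \<in> null_sets lebesgue"
  shows "\<exists>x\<in>{0..<1::real}. x \<notin> A \<and> x \<notin> Z"
proof (rule ccontr)
  assume "\<not> ?thesis"
  then have "{0..<1} \<subseteq> A \<union> Z" by blast
  have Z: "Z \<in> lmeasurable" "measure lebesgue Z = 0"
    using assms(3) by (auto intro: fmeasurableI_null_sets measure_eq_0_null_sets)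
  have "1 = measure lebesgue {0..<1::real}" by (simp add: measure_Ico)
  also have "\<dots> \<le> measure lebesgue (A \<union> Z)"
    using \<open>{0..<1} \<subseteq> A \<union> Z\<close> assms(1) Z by (intro measure_mono_fmeasurable) auto
  also have "\<dots> \<le> measure lebesgue A + measure lebesgue Z"
    using assms(1) Z by (intro measure_Un_le) auto
  finally show False using assms(2) Z by simp
qed

lemma overlaps_null:
  fixes S :: "'i \<Rightarrow> 'a::euclidean_space set"
  assumes finI: "finite I" and lm: "\<And>i. i \<in> I \<Longrightarrow> S i \<in> lmeasurable"
    and meas: "\<And>i. i \<in> I \<Longrightarrow> measure lebesgue (S i) = \<mu>"
    and union: "measure lebesgue (\<Union>i\<in>I. S i) = real (card I) * \<mu>"
    and ij: "i \<in> I" "j \<in> I" "i \<noteq> j"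
  shows "measure lebesgue (S i \<inter> S j) = 0"
proof -
  let ?F = "I - {i, j}"
  have split: "(\<Union>i\<in>I. S i) = (S i \<union> S j) \<union> (\<Union>v\<in>?F. S v)" using ij by blast
  have "card {i, j} \<le> card I" using ij finI by (intro card_mono) auto
  then have two: "card I \<ge> 2" using ij by simp
  have "measure lebesgue (\<Union>v\<in>?F. S v) \<le> (\<Sum>v\<in>?F. measure lebesgue (S v))"
    using finI lm by (intro measure_UNION_le) auto
  also have "\<dots> = real (card ?F) * \<mu>" using meas by simp
  also have "card ?F = card I - 2" using ij finI by (subst card_Diff_subset) auto
  finally have rest: "measure lebesgue (\<Union>v\<in>?F. S v) \<le> real (card I) * \<mu> - 2 * \<mu>"
    using two by (simp add: of_nat_diff algebra_simps)
  have "real (card I) * \<mu> \<le> measure lebesgue (S i \<union> S j) + measure lebesgue (\<Union>v\<in>?F. S v)"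
    unfolding union[symmetric] split using lm ij finI
    by (intro measure_Un_le) (auto intro!: sets.finite_UN fmeasurableD)
  moreover have "measure lebesgue (S i \<union> S j) = 2 * \<mu> - measure lebesgue (S i \<inter> S j)"
    using measure_Un3[OF lm lm, of i j] meas ij by simp
  ultimately show ?thesis using rest measure_nonneg[of lebesgue "S i \<inter> S j"] by linarith
qed

definition cell :: "real \<Rightarrow> int \<Rightarrow> real set" where
  "cell h j = {real_of_int j * h ..< (real_of_int j + 1) * h}"

lemma mem_cell_iff:
  assumes "h > 0"
  shows "y \<in> cell h j \<longleftrightarrow> \<lfloor>y / h\<rfloor> = j"
proof -
  have "y \<in> cell h j \<longleftrightarrow> real_of_int j \<le> y / h \<and> y / h < real_of_int j + 1"
    using assms by (simp add: cell_def pos_le_divide_eq pos_divide_less_eq)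
  also have "\<dots> \<longleftrightarrow> \<lfloor>y / h\<rfloor> = j" by (simp add: floor_eq_iff)
  finally show ?thesis .
qed

lemma lmeasurable_cell: "cell h j \<in> lmeasurable"
  unfolding cell_def by (rule lmeasurable_Ico)

lemma measure_cell: "h > 0 \<Longrightarrow> measure lebesgue (cell h j) = h"
  unfolding cell_def by (subst measure_Ico) (simp_all add: algebra_simps)

lemma finite_cells_meeting:
  assumes "bounded X" and h: "h > 0"
  shows "finite {j. cell h j \<inter> X \<noteq> {}}"
proof -
  obtain B where B: "\<forall>x\<in>X. \<bar>x\<bar> \<le> B" using assms(1) bounded_real by blast
  have "{j. cell h j \<inter> X \<noteq> {}} \<subseteq> {\<lfloor>- B / h\<rfloor> .. \<lfloor>B / h\<rfloor>}"
  proof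
    fix j assume "j \<in> {j. cell h j \<inter> X \<noteq> {}}"
    then obtain x where x: "x \<in> X" "\<lfloor>x / h\<rfloor> = j" using mem_cell_iff[OF h] by blast
    have "- B \<le> x" "x \<le> B" using B x(1) by auto
    then have "- B / h \<le> x / h" "x / h \<le> B / h"
      using divide_right_mono[of "- B" x h] divide_right_mono[of x B h] h by auto
    then show "j \<in> {\<lfloor>- B / h\<rfloor> .. \<lfloor>B / h\<rfloor>}" using x(2) by (auto intro: floor_mono)
  qed
  then show ?thesis by (rule finite_subset) simp
qed

lemma grid_defects_le:
  fixes X T :: "real set"
  assumes X: "compact X" and T: "T - X \<in> lmeasurable" and h: "h > 0" and \<delta>: "\<delta> \<ge> 0"
    and cells_in_T: "\<And>j. cell h j \<inter> X \<noteq> {} \<Longrightarrow> cell h j \<subseteq> T"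
    and defect: "\<And>j. \<delta> * h \<le> measure lebesgue (cell h j - X)"
  shows "\<delta> * measure lebesgue X \<le> measure lebesgue (T - X)"
proof -
  let ?\<mu> = "measure lebesgue X"
  have X_lm: "X \<in> lmeasurable" using X by (rule lmeasurable_compact)
  define J where "J = {j. cell h j \<inter> X \<noteq> {}}"
  have finJ: "finite J"
    unfolding J_def using finite_cells_meeting[OF compact_imp_bounded[OF X] h] .
  have X_cover: "X \<subseteq> (\<Union>j\<in>J. cell h j)"
  proof
    fix x assume "x \<in> X"
    moreover have "x \<in> cell h \<lfloor>x / h\<rfloor>" using mem_cell_iff[OF h] by simp
    ultimately show "x \<in> (\<Union>j\<in>J. cell h j)" unfolding J_def by blast
  qed
  have disjoint: "pairwise (\<lambda>i j. disjnt (cell h i - X) (cell h j - X)) J"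
  proof (unfold pairwise_def disjnt_def, intro ballI impI equals0I)
    fix i j y assume "i \<noteq> j" "y \<in> (cell h i - X) \<inter> (cell h j - X)"
    then show False using mem_cell_iff[OF h] by auto
  qed
  have defects_sum: "measure lebesgue (\<Union>j\<in>J. cell h j - X)
      = (\<Sum>j\<in>J. measure lebesgue (cell h j - X))"
    using finJ disjoint lmeasurable_cell X_lm by (intro measure_UNION') auto
  have "?\<mu> \<le> measure lebesgue (\<Union>j\<in>J. cell h j)"
    using X_cover finJ lmeasurable_cell X_lm by (intro measure_mono_fmeasurable) auto
  also have "\<dots> \<le> (\<Sum>j\<in>J. measure lebesgue (cell h j))"
    using finJ lmeasurable_cell by (intro measure_UNION_le) auto
  also have "\<dots> = real (card J) * h" using measure_cell[OF h] by simp
  finally have "\<delta> * ?\<mu> \<le> real (card J) * (\<delta> * h)"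
    using \<delta> by (simp add: algebra_simps mult_left_mono)
  also have "\<dots> \<le> (\<Sum>j\<in>J. measure lebesgue (cell h j - X))"
    using sum_mono[of J "\<lambda>_. \<delta> * h", OF defect] by simp
  also have "\<dots> = measure lebesgue (\<Union>j\<in>J. cell h j - X)" by (rule defects_sum[symmetric])
  also have "\<dots> \<le> measure lebesgue (T - X)"
    using finJ cells_in_T lmeasurable_cell X_lm T unfolding J_def
    by (intro measure_mono_fmeasurable) (auto intro!: sets.finite_UN fmeasurableD)
  finally show ?thesis .
qed

text \<open>Otherwise, for an open
  T containing X with |T - X| < delta |X| and a mesh below the distance from X to the
  complement of T, defect counting would give delta |X| <= |T - X|.\<close>
lemma grid_cell_nearly_full:
  fixes X :: "real set"
  assumes X: "compact X" "measure lebesgue X > 0" and \<delta>: "\<delta> > 0"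
  shows "\<exists>\<eta>>0. \<forall>h. 0 < h \<longrightarrow> h < \<eta> \<longrightarrow> (\<exists>j. measure lebesgue (cell h j - X) < \<delta> * h)"
proof -
  let ?\<mu> = "measure lebesgue X"
  have X_lm: "X \<in> lmeasurable" using X(1) by (rule lmeasurable_compact)
  obtain T where T: "open T" "X \<subseteq> T" "T - X \<in> lmeasurable"
      "emeasure lebesgue (T - X) < ennreal (\<delta> * ?\<mu>)"
    using sets_lebesgue_outer_open[of X "\<delta> * ?\<mu>"] X_lm X(2) \<delta> by auto
  have T_small: "measure lebesgue (T - X) < \<delta> * ?\<mu>"
    using T(4) emeasure_eq_measure2[OF T(3)] by (simp add: ennreal_less_iff)
  obtain \<eta> where \<eta>: "\<eta> > 0" "(\<Union>x\<in>X. ball x \<eta>) \<subseteq> T"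
    using compact_subset_open_imp_ball_epsilon_subset[OF X(1) T(1,2)] by blast
  have "\<exists>j. measure lebesgue (cell h j - X) < \<delta> * h" if h: "0 < h" "h < \<eta>" for h
  proof (rule ccontr)
    assume "\<nexists>j. measure lebesgue (cell h j - X) < \<delta> * h"
    then have defect: "\<delta> * h \<le> measure lebesgue (cell h j - X)" for j by (meson not_less)
    have "cell h j \<subseteq> T" if meets: "cell h j \<inter> X \<noteq> {}" for j
    proof
      fix y assume y: "y \<in> cell h j"
      obtain p where p: "p \<in> X" "p \<in> cell h j" using meets by blast
      have "dist p y < \<eta>" using y p(2) h(2) unfolding cell_def dist_real_def
        by (auto simp: algebra_simps abs_less_iff)
      then have "y \<in> ball p \<eta>" by simp
      then show "y \<in> T" using \<eta>(2) p(1) by blast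
    qed
    then have "\<delta> * ?\<mu> \<le> measure lebesgue (T - X)"
      using grid_defects_le[OF X(1) T(3) h(1)] \<delta> defect by simp
    then show False using T_small by simp
  qed
  then show ?thesis using \<eta>(1) by blast
qed

section \<open>The self-similar set\<close>

text \<open>The integer with N-adic digit string w, least significant digit first.\<close>
fun address :: "nat \<Rightarrow> int list \<Rightarrow> int" where
  "address N [] = 0"
| "address N (d # w) = d + int N * address N w"

locale self_similar_tile =
  fixes N :: nat and D :: "int set" and X :: "real set"
  assumes N2: "N \<ge> 2" and finD: "finite D" and cardD: "card D = N"
    and attractor: "is_attractor N D X" and positive: "emeasure lebesgue X > 0"
begin

definition words :: "nat \<Rightarrow> int list set" where
  "words k = {w. set w \<subseteq> D \<and> length w = k}"

definition zoom :: "nat \<Rightarrow> real set" where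
  "zoom k = {y. y / real N ^ k \<in> X}"

definition piece :: "int list \<Rightarrow> real set" where
  "piece w = {y. y - real_of_int (address N w) \<in> X}"

lemma N_pos: "real N > 0" using N2 by simp

lemma X_compact: "compact X" using attractor unfolding is_attractor_def by blast

lemma X_lmeasurable: "X \<in> lmeasurable" using X_compact by (rule lmeasurable_compact)

lemma measure_X_pos: "measure lebesgue X > 0"
  using positive emeasure_eq_measure2[OF X_lmeasurable] by simp

text \<open>The self-similarity equation X = U_d tau_d(X), read as N X = U_d (d + X).\<close>
lemma attractor_step: "u / real N \<in> X \<longleftrightarrow> (\<exists>d\<in>D. u - real_of_int d \<in> X)"
proof -
  have X_eq: "X = (\<Union>d\<in>D. tau N d ` X)" using attractor unfolding is_attractor_def by blast
  have "u / real N = tau N d x \<longleftrightarrow> x = u - real_of_int d" for d x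
    using N_pos unfolding tau_def by (auto simp: field_simps)
  then have "u / real N \<in> tau N d ` X \<longleftrightarrow> u - real_of_int d \<in> X" for d
    by (auto simp: image_iff)
  then show ?thesis by (subst X_eq) blast
qed

lemma finite_words: "finite (words k)"
  unfolding words_def using finite_lists_length_eq[OF finD] .

lemma card_words: "card (words k) = N ^ k"
  unfolding words_def using card_lists_length_eq[OF finD] cardD by simp

lemma ex_words_Suc: "(\<exists>w\<in>words (Suc k). P w) \<longleftrightarrow> (\<exists>d\<in>D. \<exists>v\<in>words k. P (d # v))"
proof
  assume "\<exists>w\<in>words (Suc k). P w"
  then obtain w where w: "w \<in> words (Suc k)" "P w" by blast
  then obtain d v where "w = d # v" "length v = k" unfolding words_def by (auto simp: length_Suc_conv)
  then show "\<exists>d\<in>D. \<exists>v\<in>words k. P (d # v)" using w unfolding words_def by auto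
next
  assume "\<exists>d\<in>D. \<exists>v\<in>words k. P (d # v)"
  then obtain d v where "d \<in> D" "v \<in> words k" "P (d # v)" by blast
  then show "\<exists>w\<in>words (Suc k). P w" unfolding words_def by (intro bexI[of _ "d # v"]) auto
qed

lemma zoom_iff_piece: "y \<in> zoom k \<longleftrightarrow> (\<exists>w\<in>words k. y \<in> piece w)"
proof (induction k arbitrary: y)
  case 0
  have "words 0 = {[]}" unfolding words_def by auto
  then show ?case by (simp add: zoom_def piece_def)
next
  case (Suc k)
  have "y \<in> zoom (Suc k) \<longleftrightarrow> y / real N \<in> zoom k"
    unfolding zoom_def by (simp add: field_simps)
  also have "\<dots> \<longleftrightarrow> (\<exists>v\<in>words k. y / real N - real_of_int (address N v) \<in> X)"
    using Suc.IH unfolding piece_def by simp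
  also have "\<dots> \<longleftrightarrow> (\<exists>v\<in>words k. \<exists>d\<in>D. y - real_of_int (address N (d # v)) \<in> X)"
  proof -
    have "y / real N - real_of_int (address N v) \<in> X \<longleftrightarrow>
        (\<exists>d\<in>D. y - real_of_int (address N (d # v)) \<in> X)" for v
    proof -
      have "y / real N - real_of_int (address N v) = (y - real N * real_of_int (address N v)) / real N"
        using N_pos by (simp add: field_simps)
      then show ?thesis
        using attractor_step[of "y - real N * real_of_int (address N v)"] by (simp add: algebra_simps)
    qed
    then show ?thesis by blast
  qed
  also have "\<dots> \<longleftrightarrow> (\<exists>w\<in>words (Suc k). y \<in> piece w)"
    unfolding ex_words_Suc piece_def by blast
  finally show ?case .
qed

lemma piece_eq_translation: "piece w = (+) (real_of_int (address N w)) ` X"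
  unfolding piece_def image_translation_eq by simp

lemma zoom_eq_scaling: "zoom k = (\<lambda>x. (real N ^ k) *\<^sub>R x + 0) ` X"
  unfolding zoom_def using N_pos by (subst image_scaling_eq) auto

lemma compact_piece: "compact (piece w)"
  unfolding piece_eq_translation by (rule compact_translation[OF X_compact])

lemma lmeasurable_zoom: "zoom k \<in> lmeasurable"
  unfolding zoom_eq_scaling using compact_scaling[OF X_compact, of "real N ^ k"]
  by (simp add: lmeasurable_compact)

lemma measure_zoom: "measure lebesgue (zoom k) = real N ^ k * measure lebesgue X"
  unfolding zoom_eq_scaling measure_lebesgue_affine by simp

text \<open>Measure counting: N^k translates of X fill N^k X, whose measure is N^k |X|, so
  distinct translates overlap only in null sets.\<close>
lemma pieces_overlap_null:
  assumes "w \<in> words k" "w' \<in> words k" "w \<noteq> w'"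
  shows "measure lebesgue (piece w \<inter> piece w') = 0"
proof (rule overlaps_null[OF finite_words _ _ _ assms])
  show "piece v \<in> lmeasurable" for v by (rule lmeasurable_compact[OF compact_piece])
  show "measure lebesgue (piece v) = measure lebesgue X" for v
    unfolding piece_eq_translation by (rule measure_translation)
  have "(\<Union>v\<in>words k. piece v) = zoom k" using zoom_iff_piece by blast
  then show "measure lebesgue (\<Union>v\<in>words k. piece v) = real (card (words k)) * measure lebesgue X"
    using measure_zoom card_words by simp
qed

lemma overlap_shifts_null:
  "(\<Union>z::int. \<Union>w\<in>words k. \<Union>w'\<in>words k - {w}.
      (\<lambda>y. y - real_of_int z) ` (piece w \<inter> piece w')) \<in> null_sets lebesgue"
proof (intro null_sets_UN' countableI_type countable_finite finite_words finite_Diff)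
  fix z :: int and w w' assume "w \<in> words k" "w' \<in> words k - {w}"
  let ?A = "(\<lambda>y. y - real_of_int z) ` (piece w \<inter> piece w')"
  have A_lm: "?A \<in> lmeasurable"
    using compact_piece by (intro lmeasurable_compact compact_translation_subtract compact_Int) auto
  moreover have "measure lebesgue ?A = 0"
    unfolding measure_translation_subtract using pieces_overlap_null \<open>w \<in> words k\<close> \<open>w' \<in> _\<close> by auto
  ultimately show "?A \<in> null_sets lebesgue"
    using emeasure_eq_measure2[OF A_lm] by (intro null_setsI) auto
qed

lemma nearly_covered_window:
  assumes l: "l > (0::nat)"
  shows "\<exists>k\<ge>1. \<exists>m::int.
    measure lebesgue ({real_of_int m ..< real_of_int m + real l} - zoom k) < 1 / real l"
proof -
  obtain \<eta> where \<eta>: "\<eta> > 0" and nearly_full: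
      "\<And>h. 0 < h \<Longrightarrow> h < \<eta> \<Longrightarrow> \<exists>j. measure lebesgue (cell h j - X) < 1 / real l ^ 2 * h"
    using grid_cell_nearly_full[OF X_compact measure_X_pos, of "1 / real l ^ 2"] l by auto
  obtain k0 where k0: "real l / \<eta> < real N ^ k0" using real_arch_pow[of "real N"] N2 by auto
  define k where "k = Suc k0"
  define c where "c = real N ^ k"
  have c_pos: "c > 0" unfolding c_def using N_pos by simp
  have "real l < \<eta> * real N ^ k0" using k0 \<eta> by (simp add: divide_less_eq mult.commute)
  also have "\<dots> \<le> \<eta> * c" unfolding c_def k_def using N2 \<eta> by simp
  finally have h_small: "real l / c < \<eta>" using c_pos by (simp add: divide_less_eq mult.commute)
  have "0 < real l / c" using l c_pos by simp
  then have "\<exists>j. measure lebesgue (cell (real l / c) j - X) < 1 / real l ^ 2 * (real l / c)"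
    using h_small by (rule nearly_full)
  then obtain j where j: "measure lebesgue (cell (real l / c) j - X) < 1 / real l ^ 2 * (real l / c)" ..
  define m where "m = j * int l"
  have "cell (real l / c) j = {real_of_int m / c ..< (real_of_int m + real l) / c}"
    unfolding cell_def m_def by (simp add: field_simps)
  then have "y \<in> {real_of_int m ..< real_of_int m + real l} - zoom k \<longleftrightarrow>
      y / c \<in> cell (real l / c) j - X" for y
    using c_pos unfolding zoom_def c_def by (auto simp: divide_le_cancel divide_less_cancel)
  then have window_eq: "{real_of_int m ..< real_of_int m + real l} - zoom k
      = (\<lambda>x. c *\<^sub>R x + 0) ` (cell (real l / c) j - X)"
    unfolding image_scaling_eq[OF c_pos[THEN less_imp_neq, symmetric]] by blast
  have "measure lebesgue ({real_of_int m ..< real_of_int m + real l} - zoom k)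
      = c * measure lebesgue (cell (real l / c) j - X)"
    unfolding window_eq measure_lebesgue_affine using c_pos by simp
  also have "\<dots> < c * (1 / real l ^ 2 * (real l / c))"
    using j c_pos by (intro mult_strict_left_mono) auto
  also have "\<dots> = 1 / real l" using c_pos l by (simp add: field_simps power2_eq_square)
  finally show ?thesis unfolding k_def by auto
qed

text \<open>A random shift x in [0,1) moves the whole integer window into N^k X and avoids all
  overlaps: the exceptional shifts have measure < l * (1/l) = 1 plus a null set.\<close>
lemma good_shift:
  fixes l :: nat and m :: int
  assumes small: "measure lebesgue ({real_of_int m ..< real_of_int m + real l} - zoom k) < 1 / real l"
  obtains x where "\<And>z. z \<in> {m..<m + int l} \<Longrightarrow> x + real_of_int z \<in> zoom k"
    and "\<And>z w w'. w \<in> words k \<Longrightarrow> w' \<in> words k \<Longrightarrow>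
       x + real_of_int z \<in> piece w \<Longrightarrow> x + real_of_int z \<in> piece w' \<Longrightarrow> w = w'"
proof -
  define V where "V = {real_of_int m ..< real_of_int m + real l} - zoom k"
  define Z where "Z = {m..<m + int l}"
  define Bad where "Bad = (\<Union>z\<in>Z. (\<lambda>y. y - real_of_int z) ` V)"
  define Null where "Null = (\<Union>z::int. \<Union>w\<in>words k. \<Union>w'\<in>words k - {w}.
      (\<lambda>y. y - real_of_int z) ` (piece w \<inter> piece w'))"
  have "l > 0" using small measure_nonneg[of lebesgue V] unfolding V_def by (cases l) auto
  have V_lm: "V \<in> lmeasurable" unfolding V_def
    using lmeasurable_Ico lmeasurable_zoom by (intro fmeasurable_Diff) auto
  have Bad_lm: "Bad \<in> lmeasurable" unfolding Bad_def Z_def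
    using V_lm by (intro fmeasurable.finite_UN measurable_translation_subtract) auto
  have "measure lebesgue Bad \<le> (\<Sum>z\<in>Z. measure lebesgue ((\<lambda>y. y - real_of_int z) ` V))"
    unfolding Bad_def Z_def using V_lm
    by (intro measure_UNION_le) (auto intro: fmeasurableD measurable_translation_subtract)
  also have "\<dots> = real l * measure lebesgue V"
    unfolding measure_translation_subtract Z_def by simp
  also have "\<dots> < real l * (1 / real l)"
    using small \<open>l > 0\<close> unfolding V_def by (intro mult_strict_left_mono) auto
  finally have "measure lebesgue Bad < 1" using \<open>l > 0\<close> by simp
  then obtain x where x: "x \<in> {0..<1}" "x \<notin> Bad" "x \<notin> Null"
    using unit_interval_not_covered[OF Bad_lm _ overlap_shifts_null] unfolding Null_def by blast
  have in_zoom: "x + real_of_int z \<in> zoom k" if "z \<in> Z" for z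
  proof (rule ccontr)
    assume "x + real_of_int z \<notin> zoom k"
    then have "x + real_of_int z \<in> V" using x(1) that unfolding V_def Z_def by auto
    then have "x \<in> (\<lambda>y. y - real_of_int z) ` V" by (rule rev_image_eqI) simp
    then have "x \<in> Bad" unfolding Bad_def using that by blast
    then show False using x(2) by simp
  qed
  have unique: "w = w'" if "w \<in> words k" "w' \<in> words k"
      "x + real_of_int z \<in> piece w" "x + real_of_int z \<in> piece w'" for z w w'
  proof (rule ccontr)
    assume "w \<noteq> w'"
    then have "x \<in> (\<lambda>y. y - real_of_int z) ` (piece w \<inter> piece w')"
      using that by (intro rev_image_eqI[of "x + real_of_int z"]) auto
    then have "x \<in> Null" unfolding Null_def using that \<open>w \<noteq> w'\<close> by blast
    then show False using x(3) by simp
  qed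
  show thesis by (rule that[OF in_zoom[unfolded Z_def] unique])
qed

text \<open>Reading off digits: if every x + z (z in a window of length 2n+1) lies in exactly one
  translate address(d # v) + X, then the integers a + N address(v) with x + a in X, shifted
  to centre the window, form a set E with D + E a direct sum covering [-n, n].\<close>
lemma local_tiling_from_shift:
  fixes x :: real and m :: int and n k :: nat
  assumes in_zoom: "\<And>z. z \<in> {m..<m + int (2 * n + 1)} \<Longrightarrow> x + real_of_int z \<in> zoom (Suc k)"
    and unique: "\<And>z w w'. w \<in> words (Suc k) \<Longrightarrow> w' \<in> words (Suc k) \<Longrightarrow>
       x + real_of_int z \<in> piece w \<Longrightarrow> x + real_of_int z \<in> piece w' \<Longrightarrow> w = w'"
  shows "\<exists>E. packing D E \<and> covers D E (win n)"
proof -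
  define c where "c = m + int n"
  define E where "E = {a + int N * address N v - c | a v. x + real_of_int a \<in> X \<and> v \<in> words k}"
  have in_piece: "x + real_of_int (d + e + c) \<in> piece (d # v)"
    if "x + real_of_int a \<in> X" "e = a + int N * address N v - c" for d e a v
  proof -
    have "d + e + c - address N (d # v) = a" using that(2) by simp
    then have "real_of_int (d + e + c) - real_of_int (address N (d # v)) = real_of_int a"
      by (metis of_int_diff)
    then have "x + real_of_int (d + e + c) - real_of_int (address N (d # v)) = x + real_of_int a"
      by linarith
    then show ?thesis using that(1) unfolding piece_def by simp
  qed
  have "packing D E" unfolding packing_def
  proof (intro ballI impI)
    fix d d' e e' assume de: "d \<in> D" "d' \<in> D" "e \<in> E" "e' \<in> E" "d + e = d' + e'"
    obtain a v where av: "x + real_of_int a \<in> X" "v \<in> words k" "e = a + int N * address N v - c"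
      using de(3) unfolding E_def by blast
    obtain a' v' where av': "x + real_of_int a' \<in> X" "v' \<in> words k"
        "e' = a' + int N * address N v' - c"
      using de(4) unfolding E_def by blast
    have words_dv: "d # v \<in> words (Suc k)" "d' # v' \<in> words (Suc k)"
      using de(1,2) av(2) av'(2) unfolding words_def by auto
    have p: "x + real_of_int (d + e + c) \<in> piece (d # v)" by (rule in_piece[OF av(1,3)])
    have "d + e + c = d' + e' + c" using de(5) by simp
    then have p': "x + real_of_int (d + e + c) \<in> piece (d' # v')"
      using in_piece[OF av'(1,3)] by simp
    have "d # v = d' # v'" using words_dv p p' by (rule unique)
    then show "d = d' \<and> e = e'" using de(5) by simp
  qed
  moreover have "covers D E (win n)" unfolding covers_def
  proof
    fix z assume "z \<in> win n"
    then have "z + c \<in> {m..<m + int (2 * n + 1)}" unfolding c_def win_def by auto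
    then have "x + real_of_int (z + c) \<in> zoom (Suc k)" by (rule in_zoom)
    then obtain d v where dv: "d \<in> D" "v \<in> words k" "x + real_of_int (z + c) \<in> piece (d # v)"
      unfolding zoom_iff_piece ex_words_Suc by blast
    define a where "a = z + c - address N (d # v)"
    have "x + real_of_int a \<in> X" using dv(3) unfolding piece_def a_def by (simp add: algebra_simps)
    then have "a + int N * address N v - c \<in> E" unfolding E_def using dv(2) by blast
    moreover have "z = d + (a + int N * address N v - c)" unfolding a_def by simp
    ultimately show "\<exists>d\<in>D. \<exists>e\<in>E. z = d + e" using dv(1) by blast
  qed
  ultimately show ?thesis by blast
qed

lemma local_tilings: "\<exists>E. packing D E \<and> covers D E (win n)"
proof -
  obtain k m where k: "k \<ge> 1" and small:
      "measure lebesgue ({real_of_int m ..< real_of_int m + real (2 * n + 1)} - zoom k)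
        < 1 / real (2 * n + 1)"
    using nearly_covered_window[of "2 * n + 1"] by auto
  obtain k' where k': "k = Suc k'" using k by (cases k) auto
  obtain x where "\<And>z. z \<in> {m..<m + int (2 * n + 1)} \<Longrightarrow> x + real_of_int z \<in> zoom (Suc k')"
    and "\<And>z w w'. w \<in> words (Suc k') \<Longrightarrow> w' \<in> words (Suc k') \<Longrightarrow>
       x + real_of_int z \<in> piece w \<Longrightarrow> x + real_of_int z \<in> piece w' \<Longrightarrow> w = w'"
    using good_shift[OF small[unfolded k']] by metis
  then show ?thesis by (rule local_tiling_from_shift)
qed

end

theorem proposition4p3:
  fixes N :: nat and D :: "int set" and X :: "real set"
  assumes "N \<ge> 2"
    and "finite D" and "card D = N"
    and "is_attractor N D X"
    and "emeasure lebesgue X > 0"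
  shows "\<exists>E :: int set. direct_sum_Z D E"
proof -
  interpret self_similar_tile N D X
    using assms by unfold_locales
  show ?thesis using tiling_from_local_tilings[OF finD local_tilings] .
qed

end
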